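(* The function $$G:\lambda_{Lag}\mapsto\int_0^\infty e^{-\lambda s}\left(U\Big((U')^{-1}\big(\tfrac{1}{\lambda_{Lag}}e^{(\lambda-\delta)s}\big)\Big)-h\Big(\big(\tfrac{h'}{\varphi'}\big)^{-1}\big(\tfrac{1}{\lambda_{Lag}}e^{(\lambda-\delta)s}\big)\vee 0\Big)\right)ds$$ is increasing on $(0,\infty)$.
   Context: Standing assumptions: $\varphi:[0,\infty)\to[0,\infty)$ is $C^2$, strictly concave, bounded, increasing, $\varphi(0)=0$, $\varphi'(0)>0$; $U:[0,\infty)\to[0,\infty)$ is $C^2$, strictly concave, increasing, $U(0)=0$, $\lim_{x\to\infty}U'(x)=0$, $\lim_{x\to0}U'(x)=\infty$; $h:[0,\infty)\to[0,\infty)$ is $C^2$, strictly convex, increasing, $h(0)=0$, $h'(0)>0$; $\lambda\ge\delta>0$ are constants. The notation $(h'/\varphi')^{-1}(y)\vee0$ means the inverse of the increasing function $h'/\varphi'$ at $y$ when defined and nonnegative, and $0$ otherwise. *)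

theory Defs
  imports "HOL-Analysis.Analysis"
begin

definition strict_convex_on :: "real set \<Rightarrow> (real \<Rightarrow> real) \<Rightarrow> bool" where
  "strict_convex_on S f \<longleftrightarrow> convex S \<and>
    (\<forall>x\<in>S. \<forall>y\<in>S. \<forall>u. x \<noteq> y \<and> 0 < u \<and> u < 1 \<longrightarrow>
       f (u * x + (1 - u) * y) < u * f x + (1 - u) * f y)"

definition strict_concave_on :: "real set \<Rightarrow> (real \<Rightarrow> real) \<Rightarrow> bool" where
  "strict_concave_on S f \<longleftrightarrow> strict_convex_on S (\<lambda>x. - f x)"

definition inv_pos :: "(real \<Rightarrow> real) \<Rightarrow> real \<Rightarrow> real" where
  "inv_pos f y = (if \<exists>x>0. f x = y then (THE x. x > 0 \<and> f x = y) else 0)"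

text \<open>Inverse of a function on [0,\<infinity>) at y when defined (and nonnegative), 0 otherwise:
  this is (f)^-1(y) \<or> 0 in the paper's notation.\<close>
definition inv_nonneg_or_zero :: "(real \<Rightarrow> real) \<Rightarrow> real \<Rightarrow> real" where
  "inv_nonneg_or_zero f y = (if \<exists>x\<ge>0. f x = y then (THE x. x \<ge> 0 \<and> f x = y) else 0)"

end

(*
  For fixed s the integrand increases with L.  Put y = exp((lam - del) s) / L, which decreases
  as L grows.  Since U' is continuous, strictly decreasing and maps (0,oo) onto (0,oo), its
  inverse is decreasing, so U((U')^-1 y) increases with L.  The ratio h'/phi' is continuous and
  strictly increasing on [0,oo) (h' increases, phi' decreases and stays positive because phi is
  increasing), and it is unbounded because a bounded concave phi has arbitrarily small slopes.
  So once a value is attained, every larger value is attained too (IVT), and the inverse of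
  h'/phi', set to 0 off its range, is nondecreasing; hence h of it decreases with L.
  Integrating against the weight exp(-lam s) > 0 gives the claim.
*)

theory Submission
  imports Defs
begin

lemma strict_convex_on_imp_convex_on:
  assumes "strict_convex_on S f"
  shows "convex_on S f"
proof
  show "convex S"
    using assms unfolding strict_convex_on_def by blast
  fix t x y :: real
  assume "0 < t" "t < 1" "x \<in> S" "y \<in> S" "x < y"
  then have "f (t * y + (1 - t) * x) < t * f y + (1 - t) * f x"
    using assms unfolding strict_convex_on_def by auto
  then show "f ((1 - t) *\<^sub>R x + t *\<^sub>R y) \<le> (1 - t) * f x + t * f y"
    by (simp add: algebra_simps)
qed

lemma strict_concave_on_imp_concave_on: "strict_concave_on S f \<Longrightarrow> concave_on S f"
  unfolding strict_concave_on_def concave_on_def by (rule strict_convex_on_imp_convex_on)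

lemma convex_on_deriv_le_slope:
  fixes f :: "real \<Rightarrow> real"
  assumes cv: "convex_on S f" and c: "c \<in> S" and x: "x \<in> S" and cx: "c < x"
    and d: "(f has_real_derivative d) (at c within S)"
  shows "d \<le> (f x - f c) / (x - c)"
proof -
  have sub: "{c<..<x} \<subseteq> S"
    using connected_contains_Icc[OF convex_connected[OF convex_on_imp_convex[OF cv]] c x] by auto
  have at_eq: "at c within {c<..<x} = at_right c"
    by (rule at_within_nhd[of _ "{..<x}"]) (use cx in auto)
  have "((\<lambda>y. (f y - f c) / (y - c)) \<longlongrightarrow> d) (at c within S)"
    using d unfolding has_field_derivative_iff by simp
  then have lim: "((\<lambda>y. (f y - f c) / (y - c)) \<longlongrightarrow> d) (at_right c)"
    unfolding at_eq[symmetric] by (rule tendsto_within_subset[OF _ sub])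
  have "eventually (\<lambda>y. (f y - f c) / (y - c) \<le> (f x - f c) / (x - c)) (at_right c)"
    using eventually_at_right_real[OF cx]
  proof eventually_elim
    case (elim y)
    then have "(f c - f y) / (c - y) \<le> (f c - f x) / (c - x)"
      using convex_on_slope_le(1)[OF cv c x, of y] by auto
    then show ?case
      by (metis minus_diff_eq minus_divide_divide)
  qed
  with lim show ?thesis
    by (intro tendsto_upperbound) auto
qed

lemma convex_on_slope_le_deriv:
  fixes f :: "real \<Rightarrow> real"
  assumes cv: "convex_on S f" and c: "c \<in> S" and x: "x \<in> S" and xc: "x < c"
    and d: "(f has_real_derivative d) (at c within S)"
  shows "(f c - f x) / (c - x) \<le> d"
proof -
  have sub: "{x<..<c} \<subseteq> S"
    using connected_contains_Icc[OF convex_connected[OF convex_on_imp_convex[OF cv]] x c] by auto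
  have at_eq: "at c within {x<..<c} = at_left c"
    by (rule at_within_nhd[of _ "{x<..}"]) (use xc in auto)
  have "((\<lambda>y. (f y - f c) / (y - c)) \<longlongrightarrow> d) (at c within S)"
    using d unfolding has_field_derivative_iff by simp
  then have lim: "((\<lambda>y. (f y - f c) / (y - c)) \<longlongrightarrow> d) (at_left c)"
    unfolding at_eq[symmetric] by (rule tendsto_within_subset[OF _ sub])
  have "eventually (\<lambda>y. (f c - f x) / (c - x) \<le> (f y - f c) / (y - c)) (at_left c)"
    using eventually_at_left_real[OF xc]
  proof eventually_elim
    case (elim y)
    then have "(f x - f c) / (x - c) \<le> (f y - f c) / (y - c)"
      using convex_on_slope_le(2)[OF cv x c, of y] by auto
    then show ?case
      by (metis minus_diff_eq minus_divide_divide)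
  qed
  with lim show ?thesis
    by (intro tendsto_lowerbound) auto
qed

lemma strict_convex_on_deriv_less:
  fixes f :: "real \<Rightarrow> real"
  assumes sc: "strict_convex_on S f" and x: "x \<in> S" and y: "y \<in> S" and xy: "x < y"
    and dx: "(f has_real_derivative a) (at x within S)"
    and dy: "(f has_real_derivative b) (at y within S)"
  shows "a < b"
proof -
  define m where "m = (x + y) / 2"
  have cv: "convex_on S f"
    using sc by (rule strict_convex_on_imp_convex_on)
  have m: "x < m" "m < y" "m - x = y - m"
    using xy unfolding m_def by (auto simp: field_simps)
  have mS: "m \<in> S"
    using connected_contains_Icc[OF convex_connected[OF convex_on_imp_convex[OF cv]] x y] m by auto
  have "\<forall>u. 0 < u \<and> u < 1 \<longrightarrow> f (u * x + (1 - u) * y) < u * f x + (1 - u) * f y"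
    using sc x y xy unfolding strict_convex_on_def by auto
  then have "f m < (f x + f y) / 2"
    unfolding m_def by (auto dest: spec[of _ "1/2"] simp: add_divide_distrib)
  then have "(f m - f x) / (y - m) < (f y - f m) / (y - m)"
    using m by (intro divide_strict_right_mono) auto
  then have "(f m - f x) / (m - x) < (f y - f m) / (y - m)"
    unfolding m(3) .
  moreover have "a \<le> (f m - f x) / (m - x)"
    using convex_on_deriv_le_slope[OF cv x mS m(1) dx] .
  moreover have "(f y - f m) / (y - m) \<le> b"
    using convex_on_slope_le_deriv[OF cv y mS m(2) dy] .
  ultimately show ?thesis
    by linarith
qed

lemma strict_concave_on_deriv_less:
  fixes f :: "real \<Rightarrow> real"
  assumes sc: "strict_concave_on S f" and xy: "x \<in> S" "y \<in> S" "x < y"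
    and dx: "(f has_real_derivative a) (at x within S)"
    and dy: "(f has_real_derivative b) (at y within S)"
  shows "b < a"
proof -
  have "- a < - b"
    using sc unfolding strict_concave_on_def
    by (rule strict_convex_on_deriv_less[OF _ xy DERIV_minus[OF dx] DERIV_minus[OF dy]])
  then show ?thesis
    by simp
qed

lemma concave_on_slope_le_deriv:
  fixes f :: "real \<Rightarrow> real"
  assumes cc: "concave_on S f" and c: "c \<in> S" and x: "x \<in> S" and cx: "c < x"
    and d: "(f has_real_derivative d) (at c within S)"
  shows "(f x - f c) / (x - c) \<le> d"
proof -
  have "- d \<le> (- f x - - f c) / (x - c)"
    using cc unfolding concave_on_def
    by (rule convex_on_deriv_le_slope[OF _ c x cx DERIV_minus[OF d]])
  moreover have "(- f x - - f c) / (x - c) = - ((f x - f c) / (x - c))"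
    by (simp add: minus_divide_left)
  ultimately show ?thesis
    by linarith
qed

lemma concave_on_deriv_le_slope:
  fixes f :: "real \<Rightarrow> real"
  assumes cc: "concave_on S f" and c: "c \<in> S" and x: "x \<in> S" and xc: "x < c"
    and d: "(f has_real_derivative d) (at c within S)"
  shows "d \<le> (f c - f x) / (c - x)"
proof -
  have "(- f c - - f x) / (c - x) \<le> - d"
    using cc unfolding concave_on_def
    by (rule convex_on_slope_le_deriv[OF _ c x xc DERIV_minus[OF d]])
  moreover have "(- f c - - f x) / (c - x) = - ((f c - f x) / (c - x))"
    by (simp add: minus_divide_left)
  ultimately show ?thesis
    by linarith
qed

lemma strict_concave_on_mono_deriv_pos:
  fixes f :: "real \<Rightarrow> real"
  assumes sc: "strict_concave_on {a..} f" and mono: "mono_on {a..} f"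
    and d: "\<And>x. x \<ge> a \<Longrightarrow> (f has_real_derivative f' x) (at x within {a..})"
    and x: "x \<ge> a"
  shows "f' x > 0"
proof -
  have "(f (x + 2) - f (x + 1)) / ((x + 2) - (x + 1)) \<le> f' (x + 1)"
    by (rule concave_on_slope_le_deriv[OF strict_concave_on_imp_concave_on[OF sc]])
      (use x in \<open>auto intro: d\<close>)
  moreover have "f (x + 1) \<le> f (x + 2)"
    using x by (intro mono_onD[OF mono]) auto
  moreover have "f' (x + 1) < f' x"
    by (rule strict_concave_on_deriv_less[OF sc, where x = x and y = "x + 1"])
      (use x in \<open>auto intro: d\<close>)
  ultimately show ?thesis
    by simp
qed

lemma concave_on_bounded_deriv_small:
  fixes f :: "real \<Rightarrow> real"
  assumes cc: "concave_on {a..} f" and bdd: "bounded (f ` {a..})"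
    and d: "\<And>x. x \<ge> a \<Longrightarrow> (f has_real_derivative f' x) (at x within {a..})"
    and c: "c > 0"
  obtains x where "x \<ge> a" "f' x < c"
proof -
  obtain B where B: "\<And>x. x \<ge> a \<Longrightarrow> \<bar>f x\<bar> \<le> B"
    using bdd unfolding bounded_iff by auto
  have "B \<ge> 0"
    using B[of a] by simp
  define x where "x = a + (2 * B + 1) / c"
  have x: "x > a" "x - a = (2 * B + 1) / c"
    using \<open>B \<ge> 0\<close> c unfolding x_def by auto
  have "f' x \<le> (f x - f a) / (x - a)"
    by (rule concave_on_deriv_le_slope[OF cc]) (use x in \<open>auto intro: d\<close>)
  also have "\<dots> \<le> 2 * B / (x - a)"
    using B[of x] B[of a] x by (intro divide_right_mono) auto
  also have "\<dots> < c"
    using x c \<open>B \<ge> 0\<close> by (simp add: field_simps)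
  finally show ?thesis
    using that[of x] x(1) by simp
qed

lemma inv_pos_eqI:
  assumes inj: "inj_on f {0<..}" and x: "x > 0" "f x = y"
  shows "inv_pos f y = x"
proof -
  have "(THE x. x > 0 \<and> f x = y) = x"
  proof (rule the_equality)
    show "z = x" if "z > 0 \<and> f z = y" for z
      using inj_onD[OF inj, of z x] that x by simp
  qed (use x in simp)
  moreover have "\<exists>x>0. f x = y"
    using x by blast
  ultimately show ?thesis
    unfolding inv_pos_def by simp
qed

lemma inv_nonneg_or_zero_eqI:
  assumes inj: "inj_on f {0..}" and x: "x \<ge> 0" "f x = y"
  shows "inv_nonneg_or_zero f y = x"
proof -
  have "(THE x. x \<ge> 0 \<and> f x = y) = x"
  proof (rule the_equality)
    show "z = x" if "z \<ge> 0 \<and> f z = y" for z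
      using inj_onD[OF inj, of z x] that x by simp
  qed (use x in simp)
  moreover have "\<exists>x\<ge>0. f x = y"
    using x by blast
  ultimately show ?thesis
    unfolding inv_nonneg_or_zero_def by simp
qed

lemma inv_nonneg_or_zero_nonneg:
  assumes inj: "inj_on f {0..}"
  shows "inv_nonneg_or_zero f y \<ge> 0"
proof (cases "\<exists>x\<ge>0. f x = y")
  case True
  then obtain x where x: "x \<ge> 0" "f x = y"
    by blast
  show ?thesis
    using inv_nonneg_or_zero_eqI[OF inj x] x(1) by simp
next
  case False
  then show ?thesis
    unfolding inv_nonneg_or_zero_def if_not_P[OF False] by simp
qed

lemma inv_nonneg_or_zero_mono:
  fixes f :: "real \<Rightarrow> real"
  assumes sm: "strict_mono_on {0..} f" and cont: "continuous_on {0..} f"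
    and unbdd: "\<And>y. \<exists>x\<ge>0. y \<le> f x"
  shows "mono (inv_nonneg_or_zero f)"
proof (rule monoI)
  have inj: "inj_on f {0..}"
    using sm by (rule strict_mono_on_imp_inj_on)
  fix y1 y2 :: real
  assume y12: "y1 \<le> y2"
  show "inv_nonneg_or_zero f y1 \<le> inv_nonneg_or_zero f y2"
  proof (cases "\<exists>x\<ge>0. f x = y1")
    case False
    then have "inv_nonneg_or_zero f y1 = 0"
      unfolding inv_nonneg_or_zero_def if_not_P[OF False] by simp
    then show ?thesis
      using inv_nonneg_or_zero_nonneg[OF inj] by simp
  next
    case True
    then obtain x1 where x1: "x1 \<ge> 0" "f x1 = y1"
      by auto
    obtain x where x: "x \<ge> 0" "y2 \<le> f x"
      using unbdd by auto
    have "x1 \<le> x"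
      using strict_mono_onD[OF sm, of x x1] x x1 y12 by force
    moreover have "continuous_on {x1..x} f"
      using x1 by (intro continuous_on_subset[OF cont]) auto
    ultimately obtain x2 where x2: "x1 \<le> x2" "f x2 = y2"
      using IVT'[of f x1 y2 x] x1 x y12 by auto
    have "x2 \<ge> 0"
      using x1(1) x2(1) by linarith
    then have "inv_nonneg_or_zero f y2 = x2"
      by (rule inv_nonneg_or_zero_eqI[OF inj _ x2(2)])
    then show ?thesis
      using inv_nonneg_or_zero_eqI[OF inj x1] x2(1) by simp
  qed
qed

lemma pos_mem_image_of_limits:
  fixes f :: "real \<Rightarrow> real"
  assumes cont: "continuous_on {0<..} f" and at_0: "filterlim f at_top (at_right 0)"
    and at_top: "(f \<longlongrightarrow> 0) at_top" and y: "y > 0"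
  shows "y \<in> f ` {0<..}"
proof -
  have "eventually (\<lambda>x. y \<le> f x \<and> x > 0) (at_right 0)"
    using at_0[unfolded filterlim_at_top, rule_format, of y] eventually_at_right_less
    by (rule eventually_conj)
  then obtain a where a: "y \<le> f a" "0 < a"
    using eventually_happens[of _ "at_right (0::real)"] by auto
  have "eventually (\<lambda>x. f x < y \<and> a \<le> x) at_top"
    using order_tendstoD(2)[OF at_top y] eventually_ge_at_top by (rule eventually_conj)
  then obtain b where b: "f b < y" "a \<le> b"
    using eventually_happens[of _ "at_top::real filter"] by auto
  have "continuous_on {a..b} f"
    using a(2) by (intro continuous_on_subset[OF cont]) auto
  then obtain x where "a \<le> x" "f x = y"
    using IVT2'[of f b y a] a b by auto
  then show ?thesis
    using a(2) by force
qed

lemma inv_pos_pos_and_inverse: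
  assumes "inj_on f {0<..}" "y \<in> f ` {0<..}"
  shows "inv_pos f y > 0 \<and> f (inv_pos f y) = y"
proof -
  obtain x where x: "x > 0" "f x = y"
    using assms(2) by auto
  then show ?thesis
    using inv_pos_eqI[OF assms(1) x] by simp
qed

lemma inv_pos_antimono:
  fixes f :: "real \<Rightarrow> real"
  assumes sa: "strict_antimono_on {0<..} f" and onto: "{0<..} \<subseteq> f ` {0<..}"
  shows "antimono_on {0<..} (inv_pos f)"
proof (rule monotone_onI)
  have inj: "inj_on f {0<..}"
    using sa strict_antimono_iff_antimono by blast
  fix y1 y2 :: real
  assume y: "y1 \<in> {0<..}" "y2 \<in> {0<..}" "y1 \<le> y2"
  have inv1: "inv_pos f y1 > 0" "f (inv_pos f y1) = y1"
    using inv_pos_pos_and_inverse[OF inj] onto y(1) by auto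
  have inv2: "inv_pos f y2 > 0" "f (inv_pos f y2) = y2"
    using inv_pos_pos_and_inverse[OF inj] onto y(2) by auto
  show "inv_pos f y2 \<le> inv_pos f y1"
  proof (rule ccontr)
    assume "\<not> ?thesis"
    then have "f (inv_pos f y2) < f (inv_pos f y1)"
      using inv1 inv2 by (intro monotone_onD[OF sa]) auto
    then show False
      using inv1 inv2 y by simp
  qed
qed

lemma strict_mono_on_divide:
  fixes f g :: "'a::linorder \<Rightarrow> real"
  assumes f: "strict_mono_on S f" and g: "strict_antimono_on S g"
    and f_pos: "\<And>x. x \<in> S \<Longrightarrow> f x > 0" and g_pos: "\<And>x. x \<in> S \<Longrightarrow> g x > 0"
  shows "strict_mono_on S (\<lambda>x. f x / g x)"
proof (rule strict_mono_onI)
  fix x y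
  assume xy: "x \<in> S" "y \<in> S" "x < y"
  then have "f x < f y" "g y < g x"
    using strict_mono_onD[OF f] monotone_onD[OF g] by auto
  then have "f x * g y < f y * g x"
    using f_pos[OF xy(2)] g_pos[OF xy(2)] by (intro mult_strict_mono) auto
  then show "f x / g x < f y / g y"
    using g_pos xy by (simp add: divide_simps)
qed

lemma utility_of_inv_marginal_utility_antimono:
  fixes U U' :: "real \<Rightarrow> real"
  assumes U_d1: "\<And>x. x > 0 \<Longrightarrow> (U has_real_derivative U' x) (at x)"
    and U'_cont: "continuous_on {0<..} U'"
    and U_conc: "strict_concave_on {0..} U" and U_mono: "mono_on {0..} U"
    and U'_inf: "(U' \<longlongrightarrow> 0) at_top" and U'_0: "filterlim U' at_top (at_right 0)"
  shows "antimono_on {0<..} (\<lambda>y. U (inv_pos U' y))"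
proof -
  have U'_decr: "strict_antimono_on {0<..} U'"
  proof (rule monotone_onI)
    fix x y :: real
    assume xy: "x \<in> {0<..}" "y \<in> {0<..}" "x < y"
    show "U' y < U' x"
      by (rule strict_concave_on_deriv_less[OF U_conc, where x = x and y = y])
        (use xy has_field_derivative_at_within[OF U_d1] in auto)
  qed
  have inj: "inj_on U' {0<..}"
    using U'_decr strict_antimono_iff_antimono by blast
  have onto: "{0<..} \<subseteq> U' ` {0<..}"
    using pos_mem_image_of_limits[OF U'_cont U'_0 U'_inf] by auto
  show ?thesis
  proof (rule monotone_onI)
    fix y1 y2 :: real
    assume y: "y1 \<in> {0<..}" "y2 \<in> {0<..}" "y1 \<le> y2"
    have "inv_pos U' y2 \<le> inv_pos U' y1"
      using monotone_onD[OF inv_pos_antimono[OF U'_decr onto] y] .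
    moreover have "inv_pos U' y2 > 0"
      using inv_pos_pos_and_inverse[OF inj] onto y(2) by auto
    ultimately show "U (inv_pos U' y2) \<le> U (inv_pos U' y1)"
      by (intro mono_onD[OF U_mono]) auto
  qed
qed

lemma marginal_ratio_unbounded:
  fixes \<phi> \<phi>' h' :: "real \<Rightarrow> real"
  assumes phi_conc: "concave_on {0..} \<phi>" and phi_bdd: "bounded (\<phi> ` {0..})"
    and phi_d1: "\<And>x. x \<ge> 0 \<Longrightarrow> (\<phi> has_real_derivative \<phi>' x) (at x within {0..})"
    and phi'_pos: "\<And>x. x \<ge> 0 \<Longrightarrow> \<phi>' x > 0"
    and h'_ge: "\<And>x. x \<ge> 0 \<Longrightarrow> h' 0 \<le> h' x" and h'0: "h' 0 > 0"
  shows "\<exists>x\<ge>0. y \<le> h' x / \<phi>' x"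
proof (cases "y \<le> h' 0 / \<phi>' 0")
  case False
  moreover have "h' 0 / \<phi>' 0 > 0"
    using h'0 phi'_pos[of 0] by simp
  ultimately have "y > 0"
    by linarith
  then obtain x where x: "x \<ge> 0" "\<phi>' x < h' 0 / y"
    using concave_on_bounded_deriv_small[OF phi_conc phi_bdd phi_d1, where c = "h' 0 / y"] h'0
    by auto
  have "y = h' 0 / (h' 0 / y)"
    using h'0 \<open>y > 0\<close> by simp
  also have "\<dots> < h' 0 / \<phi>' x"
    using x phi'_pos[OF x(1)] h'0 \<open>y > 0\<close> by (intro divide_strict_left_mono) auto
  also have "\<dots> \<le> h' x / \<phi>' x"
    using h'_ge[OF x(1)] phi'_pos[OF x(1)] by (intro divide_right_mono) auto
  finally show ?thesis
    using x(1) by auto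
qed auto

lemma cost_of_inv_marginal_ratio_mono:
  fixes \<phi> \<phi>' h h' :: "real \<Rightarrow> real"
  assumes phi_d1: "\<And>x. x \<ge> 0 \<Longrightarrow> (\<phi> has_real_derivative \<phi>' x) (at x within {0..})"
    and phi'_cont: "continuous_on {0..} \<phi>'"
    and phi_conc: "strict_concave_on {0..} \<phi>" and phi_bdd: "bounded (\<phi> ` {0..})"
    and phi_mono: "mono_on {0..} \<phi>"
    and h_d1: "\<And>x. x \<ge> 0 \<Longrightarrow> (h has_real_derivative h' x) (at x within {0..})"
    and h'_cont: "continuous_on {0..} h'"
    and h_conv: "strict_convex_on {0..} h" and h_mono: "mono_on {0..} h"
    and h'0: "h' 0 > 0"
  shows "mono (\<lambda>y. h (inv_nonneg_or_zero (\<lambda>x. h' x / \<phi>' x) y))"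
proof -
  define g where "g = (\<lambda>x. h' x / \<phi>' x)"
  have phi'_pos: "\<phi>' x > 0" if "x \<ge> 0" for x
    using strict_concave_on_mono_deriv_pos[OF phi_conc phi_mono phi_d1 that] .
  have phi'_decr: "strict_antimono_on {0..} \<phi>'"
  proof (rule monotone_onI)
    fix x y :: real
    assume xy: "x \<in> {0..}" "y \<in> {0..}" "x < y"
    show "\<phi>' y < \<phi>' x"
      by (rule strict_concave_on_deriv_less[OF phi_conc, where x = x and y = y])
        (use xy in \<open>auto intro: phi_d1\<close>)
  qed
  have h'_incr: "strict_mono_on {0..} h'"
  proof (rule strict_mono_onI)
    fix x y :: real
    assume xy: "x \<in> {0..}" "y \<in> {0..}" "x < y"
    show "h' x < h' y"
      by (rule strict_convex_on_deriv_less[OF h_conv, where x = x and y = y])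
        (use xy in \<open>auto intro: h_d1\<close>)
  qed
  have h'_ge: "h' 0 \<le> h' x" if "x \<ge> 0" for x
    using strict_mono_onD[OF h'_incr, of 0 x] that by (cases "x = 0") auto
  have g_incr: "strict_mono_on {0..} g"
    unfolding g_def using h'0 h'_ge phi'_pos
    by (intro strict_mono_on_divide[OF h'_incr phi'_decr]) (auto intro: order.strict_trans2)
  have g_cont: "continuous_on {0..} g"
    unfolding g_def using phi'_pos by (intro continuous_on_divide h'_cont phi'_cont) force
  have g_unbdd: "\<exists>x\<ge>0. y \<le> g x" for y
    unfolding g_def
    using strict_concave_on_imp_concave_on[OF phi_conc] phi_bdd phi_d1 phi'_pos h'_ge h'0
    by (rule marginal_ratio_unbounded)
  have inv_mono: "mono (inv_nonneg_or_zero g)"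
    using g_incr g_cont g_unbdd by (rule inv_nonneg_or_zero_mono)
  have inv_nonneg: "inv_nonneg_or_zero g y \<ge> 0" for y
    using strict_mono_on_imp_inj_on[OF g_incr] by (rule inv_nonneg_or_zero_nonneg)
  show ?thesis
    unfolding g_def[symmetric]
    by (intro monoI mono_onD[OF h_mono]) (simp_all add: inv_nonneg monoD[OF inv_mono])
qed

theorem lemma3p5:
  fixes \<phi> \<phi>' \<phi>'' U U' U'' h h' h'' :: "real \<Rightarrow> real" and lam del :: real
  assumes phi_d1: "\<And>x. x \<ge> 0 \<Longrightarrow> (\<phi> has_real_derivative \<phi>' x) (at x within {0..})"
    and phi_d2: "\<And>x. x \<ge> 0 \<Longrightarrow> (\<phi>' has_real_derivative \<phi>'' x) (at x within {0..})"
    and phi_C2: "continuous_on {0..} \<phi>''"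
    and phi_nonneg: "\<And>x. x \<ge> 0 \<Longrightarrow> \<phi> x \<ge> 0"
    and phi_conc: "strict_concave_on {0..} \<phi>"
    and phi_bdd: "bounded (\<phi> ` {0..})"
    and phi_mono: "mono_on {0..} \<phi>"
    and phi0: "\<phi> 0 = 0"
    and phi'0: "\<phi>' 0 > 0"
    and U_cont: "continuous_on {0..} U"
    and U_d1: "\<And>x. x > 0 \<Longrightarrow> (U has_real_derivative U' x) (at x)"
    and U_d2: "\<And>x. x > 0 \<Longrightarrow> (U' has_real_derivative U'' x) (at x)"
    and U_C2: "continuous_on {0<..} U''"
    and U_nonneg: "\<And>x. x \<ge> 0 \<Longrightarrow> U x \<ge> 0"
    and U_conc: "strict_concave_on {0..} U"
    and U_mono: "mono_on {0..} U"
    and U0: "U 0 = 0"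
    and U'_inf: "(U' \<longlongrightarrow> 0) at_top"
    and U'_0: "filterlim U' at_top (at_right 0)"
    and h_d1: "\<And>x. x \<ge> 0 \<Longrightarrow> (h has_real_derivative h' x) (at x within {0..})"
    and h_d2: "\<And>x. x \<ge> 0 \<Longrightarrow> (h' has_real_derivative h'' x) (at x within {0..})"
    and h_C2: "continuous_on {0..} h''"
    and h_nonneg: "\<And>x. x \<ge> 0 \<Longrightarrow> h x \<ge> 0"
    and h_conv: "strict_convex_on {0..} h"
    and h_mono: "mono_on {0..} h"
    and h0: "h 0 = 0"
    and h'0: "h' 0 > 0"
    and del_pos: "0 < del"
    and lam_ge: "del \<le> lam"
    and integrable: "\<And>L. L > 0 \<Longrightarrow> set_integrable lborel {0..}
        (\<lambda>s. exp (- lam * s) *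
           (U (inv_pos U' (exp ((lam - del) * s) / L))
            - h (inv_nonneg_or_zero (\<lambda>x. h' x / \<phi>' x) (exp ((lam - del) * s) / L))))"
  shows "mono_on {0<..}
     (\<lambda>L. LBINT s:{0..}. exp (- lam * s) *
           (U (inv_pos U' (exp ((lam - del) * s) / L))
            - h (inv_nonneg_or_zero (\<lambda>x. h' x / \<phi>' x) (exp ((lam - del) * s) / L))))"
proof -
  define F where "F L s = exp (- lam * s) *
      (U (inv_pos U' (exp ((lam - del) * s) / L))
       - h (inv_nonneg_or_zero (\<lambda>x. h' x / \<phi>' x) (exp ((lam - del) * s) / L)))" for L s
  have "continuous_on {0<..} U'"
    by (rule DERIV_continuous_on[of _ _ U'']) (auto intro: has_field_derivative_at_within U_d2)
  then have U_part: "antimono_on {0<..} (\<lambda>y. U (inv_pos U' y))"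
    using U_d1 U_conc U_mono U'_inf U'_0 by (intro utility_of_inv_marginal_utility_antimono)
  have "continuous_on {0..} \<phi>'"
    by (rule DERIV_continuous_on[of _ _ \<phi>'']) (auto intro: phi_d2)
  moreover have "continuous_on {0..} h'"
    by (rule DERIV_continuous_on[of _ _ h'']) (auto intro: h_d2)
  ultimately have h_part: "mono (\<lambda>y. h (inv_nonneg_or_zero (\<lambda>x. h' x / \<phi>' x) y))"
    using phi_d1 phi_conc phi_bdd phi_mono h_d1 h_conv h_mono h'0
    by (intro cost_of_inv_marginal_ratio_mono)
  have "F L1 s \<le> F L2 s" if "0 < L1" "L1 \<le> L2" for L1 L2 s
  proof -
    let ?y1 = "exp ((lam - del) * s) / L1" and ?y2 = "exp ((lam - del) * s) / L2"
    have y: "?y2 \<in> {0<..}" "?y1 \<in> {0<..}" "?y2 \<le> ?y1"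
      using that by (auto intro!: divide_left_mono)
    show ?thesis
      unfolding F_def using monotone_onD[OF U_part y] monoD[OF h_part y(3)]
      by (intro mult_left_mono) auto
  qed
  then have "mono_on {0<..} (\<lambda>L. LBINT s:{0..}. F L s)"
    unfolding F_def by (intro mono_onI set_integral_mono integrable) auto
  then show ?thesis
    unfolding F_def .
qed

end
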